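(* Let $(\mathcal{M},\phi,\xi,\eta,g)$ be a Riemannian $\Pi$-manifold of dimension $2n+1$. Then $\mathcal{M}$ belongs to the class $\mathcal{U}_1=\mathcal{F}_1\oplus\mathcal{F}_2\oplus\mathcal{F}_4\oplus\mathcal{F}_5\oplus\mathcal{F}_6\oplus\mathcal{F}_8\oplus\mathcal{F}_9\oplus\mathcal{F}_{10}\oplus\mathcal{F}_{11}$ if and only if $N(\phi x,\phi y)=0$ for all vector fields $x,y$ on $\mathcal{M}$.
   Context: A Riemannian $\Pi$-manifold $(\mathcal{M},\phi,\xi,\eta,g)$ is a $(2n+1)$-dimensional smooth manifold with a $(1,1)$-tensor field $\phi$, a vector field $\xi$, a 1-form $\eta$ and a Riemannian metric $g$ such that $\phi\xi=0$, $\phi^2=I-\eta\otimes\xi$, $\eta\circ\phi=0$, $\eta(\xi)=1$, $\operatorname{tr}\phi=0$, $g(\phi x,\phi y)=g(x,y)-\eta(x)\eta(y)$ (hence $g(\phi x,y)=g(x,\phi y)$, $g(x,\xi)=\eta(x)$). Let $\nabla$ be the Levi-Civita connection of $g$ and $F(x,y,z)=g((\nabla_x\phi)y,z)$. With respect to a basis $\{\xi,e_1,\dots,e_{2n}\}$ of $T_p\mathcal{M}$ and $(g^{ij})$ the inverse matrix of $(g_{ij})$, the Lee forms are $\theta=g^{ij}F(e_i,e_j,\cdot)$, $\theta^*=g^{ij}F(e_i,\phi e_j,\cdot)$, $\omega=F(\xi,\xi,\cdot)$. The basic classes $\mathcal{F}_1,\dots,\mathcal{F}_{11}$ are defined by the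 following conditions on $F$ (for all $x,y,z$): $\mathcal{F}_1$: $F(x,y,z)=\frac{1}{2n}\{g(\phi x,\phi y)\theta(\phi^2z)+g(\phi x,\phi z)\theta(\phi^2y)-g(x,\phi y)\theta(\phi z)-g(x,\phi z)\theta(\phi y)\}$; $\mathcal{F}_2$: $F(\xi,y,z)=0$, $F(x,\xi,z)=0$, $\theta=0$, $F(x,y,\phi z)+F(y,z,\phi x)+F(z,x,\phi y)=0$; $\mathcal{F}_3$: $F(\xi,y,z)=0$, $F(x,\xi,z)=0$, $F(x,y,z)+F(y,z,x)+F(z,x,y)=0$; $\mathcal{F}_4$: $F(x,y,z)=\frac{\theta(\xi)}{2n}\{g(\phi x,\phi y)\eta(z)+g(\phi x,\phi z)\eta(y)\}$; $\mathcal{F}_5$: $F(x,y,z)=\frac{\theta^*(\xi)}{2n}\{g(x,\phi y)\eta(z)+g(x,\phi z)\eta(y)\}$; $\mathcal{F}_6$: $F(x,y,z)=F(x,y,\xi)\eta(z)+F(x,z,\xi)\eta(y)$, $F(x,y,\xi)=F(y,x,\xi)=F(\phi x,\phi y,\xi)$; $\mathcal{F}_7$: same first condition, $F(x,y,\xi)=-F(y,x,\xi)=F(\phi x,\phi y,\xi)$; $\mathcal{F}_8$: same first condition, $F(x,y,\xi)=F(y,x,\xi)=-F(\phi x,\phi y,\xi)$; $\mathcal{F}_9$: same first condition, $F(x,y,\xi)=-F(y,x,\xi)=-F(\phi x,\phi y,\xi)$; $\mathcal{F}_{10}$: $F(x,y,z)=-\eta(x)F(\xi,\phi y,\phi z)$;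 $\mathcal{F}_{11}$: $F(x,y,z)=\eta(x)\{\eta(y)\omega(z)+\eta(z)\omega(y)\}$. At each point, the space of $(0,3)$-tensors with the symmetries of $F$ (namely $F(x,y,z)=F(x,z,y)=-F(x,\phi y,\phi z)+\eta(y)F(x,\xi,z)+\eta(z)F(x,y,\xi)$) is the orthogonal direct sum of the eleven subspaces given by these conditions; $\mathcal{M}$ belongs to a direct sum $\mathcal{F}_{i_1}\oplus\cdots\oplus\mathcal{F}_{i_k}$ if at every point $F$ lies in the sum of the corresponding subspaces. The Nijenhuis tensor is $N(x,y)=(\nabla_{\phi x}\phi)y-\phi(\nabla_x\phi)y-(\nabla_x\eta)(y)\xi-(\nabla_{\phi y}\phi)x+\phi(\nabla_y\phi)x+(\nabla_y\eta)(x)\xi$. *)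

theory Defs
  imports "HOL-Analysis.Analysis"
begin

section \<open>Local (chart) model of a Riemannian Pi-manifold\<close>

coinductive smooth_on :: "'a::euclidean_space set \<Rightarrow> ('a \<Rightarrow> real) \<Rightarrow> bool" for U where
  "f differentiable_on U \<Longrightarrow> (\<forall>b\<in>Basis. smooth_on U (\<lambda>p. frechet_derivative f (at p) b))
     \<Longrightarrow> smooth_on U f"

definition ginv :: "('a::euclidean_space \<Rightarrow> 'a \<Rightarrow> real) \<Rightarrow> 'a \<Rightarrow> 'a \<Rightarrow> real" where
  "ginv G = (THE h. (\<forall>i j. (i \<notin> Basis \<or> j \<notin> Basis) \<longrightarrow> h i j = 0) \<and>
      (\<forall>i\<in>Basis. \<forall>k\<in>Basis. (\<Sum>j\<in>Basis. G i j * h j k) = (if i = k then 1 else 0)))"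

definition lee_theta :: "('a::euclidean_space \<Rightarrow> 'a \<Rightarrow> real) \<Rightarrow> ('a \<Rightarrow> 'a \<Rightarrow> 'a \<Rightarrow> real) \<Rightarrow> 'a \<Rightarrow> real" where
  "lee_theta G T z = (\<Sum>i\<in>Basis. \<Sum>j\<in>Basis. ginv G i j * T i j z)"

definition lee_theta_star :: "('a::euclidean_space \<Rightarrow> 'a) \<Rightarrow> ('a \<Rightarrow> 'a \<Rightarrow> real) \<Rightarrow> ('a \<Rightarrow> 'a \<Rightarrow> 'a \<Rightarrow> real) \<Rightarrow> 'a \<Rightarrow> real" where
  "lee_theta_star f G T z = (\<Sum>i\<in>Basis. \<Sum>j\<in>Basis. ginv G i j * T i (f j) z)"

definition lee_omega :: "'a \<Rightarrow> ('a \<Rightarrow> 'a \<Rightarrow> 'a \<Rightarrow> real) \<Rightarrow> 'a \<Rightarrow> real" where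
  "lee_omega e T z = T e e z"

text \<open>The space of (0,3)-tensors (at a point with structure f = phi_p, e = xi_p,
  t = eta_p, G = g_p) having the symmetries of F.\<close>

definition F_space :: "('a::euclidean_space \<Rightarrow> 'a) \<Rightarrow> 'a \<Rightarrow> ('a \<Rightarrow> real) \<Rightarrow> ('a \<Rightarrow> 'a \<Rightarrow> 'a \<Rightarrow> real) \<Rightarrow> bool" where
  "F_space f e t T \<longleftrightarrow>
     (\<forall>y z. linear (\<lambda>x. T x y z)) \<and> (\<forall>x z. linear (\<lambda>y. T x y z)) \<and> (\<forall>x y. linear (\<lambda>z. T x y z)) \<and>
     (\<forall>x y z. T x y z = T x z y) \<and>
     (\<forall>x y z. T x y z = - T x (f y) (f z) + t y * T x e z + t z * T x y e)"

definition F_cond :: "nat \<Rightarrow> nat \<Rightarrow> ('a::euclidean_space \<Rightarrow> 'a) \<Rightarrow> 'a \<Rightarrow> ('a \<Rightarrow> real) \<Rightarrow> ('a \<Rightarrow> 'a \<Rightarrow> real)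
    \<Rightarrow> ('a \<Rightarrow> 'a \<Rightarrow> 'a \<Rightarrow> real) \<Rightarrow> bool" where
  "F_cond i n f e t G T =
    (if i = 1 then (\<forall>x y z. T x y z = 1 / (2 * real n) *
        (G (f x) (f y) * lee_theta G T (f (f z)) + G (f x) (f z) * lee_theta G T (f (f y))
         - G x (f y) * lee_theta G T (f z) - G x (f z) * lee_theta G T (f y)))
     else if i = 2 then (\<forall>x y z. T e y z = 0 \<and> T x e z = 0 \<and> lee_theta G T z = 0 \<and>
        T x y (f z) + T y z (f x) + T z x (f y) = 0)
     else if i = 3 then (\<forall>x y z. T e y z = 0 \<and> T x e z = 0 \<and>
        T x y z + T y z x + T z x y = 0)
     else if i = 4 then (\<forall>x y z. T x y z = lee_theta G T e / (2 * real n) *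
        (G (f x) (f y) * t z + G (f x) (f z) * t y))
     else if i = 5 then (\<forall>x y z. T x y z = lee_theta_star f G T e / (2 * real n) *
        (G x (f y) * t z + G x (f z) * t y))
     else if i = 6 then (\<forall>x y z. T x y z = T x y e * t z + T x z e * t y \<and>
        T x y e = T y x e \<and> T x y e = T (f x) (f y) e)
     else if i = 7 then (\<forall>x y z. T x y z = T x y e * t z + T x z e * t y \<and>
        T x y e = - T y x e \<and> T x y e = T (f x) (f y) e)
     else if i = 8 then (\<forall>x y z. T x y z = T x y e * t z + T x z e * t y \<and>
        T x y e = T y x e \<and> T x y e = - T (f x) (f y) e)
     else if i = 9 then (\<forall>x y z. T x y z = T x y e * t z + T x z e * t y \<and>
        T x y e = - T y x e \<and> T x y e = - T (f x) (f y) e)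
     else if i = 10 then (\<forall>x y z. T x y z = - t x * T e (f y) (f z))
     else if i = 11 then (\<forall>x y z. T x y z = t x * (t y * lee_omega e T z + t z * lee_omega e T y))
     else False)"

definition in_class_sum :: "nat set \<Rightarrow> nat \<Rightarrow> ('a::euclidean_space \<Rightarrow> 'a) \<Rightarrow> 'a \<Rightarrow> ('a \<Rightarrow> real)
    \<Rightarrow> ('a \<Rightarrow> 'a \<Rightarrow> real) \<Rightarrow> ('a \<Rightarrow> 'a \<Rightarrow> 'a \<Rightarrow> real) \<Rightarrow> bool" where
  "in_class_sum I n f e t G T \<longleftrightarrow>
     (\<exists>A. (\<forall>i\<in>I. F_space f e t (A i) \<and> F_cond i n f e t G (A i)) \<and>
          (\<forall>x y z. T x y z = (\<Sum>i\<in>I. A i x y z)))"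

definition U1_classes :: "nat set" where
  "U1_classes = {1, 2, 4, 5, 6, 8, 9, 10, 11}"

text \<open>Riemannian Pi-structure on an open chart domain U (fields are given by
  their values at points p; phi p, eta p, g p are the tensors at p).\<close>

definition riem_pi_manifold ::
  "nat \<Rightarrow> 'a::euclidean_space set \<Rightarrow> ('a \<Rightarrow> 'a \<Rightarrow> 'a) \<Rightarrow> ('a \<Rightarrow> 'a) \<Rightarrow> ('a \<Rightarrow> 'a \<Rightarrow> real)
     \<Rightarrow> ('a \<Rightarrow> 'a \<Rightarrow> 'a \<Rightarrow> real) \<Rightarrow> bool" where
  "riem_pi_manifold n U phi xi eta g \<longleftrightarrow>
     open U \<and> DIM('a) = 2 * n + 1 \<and>
     (\<forall>b\<in>Basis. \<forall>b'\<in>Basis.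
        smooth_on U (\<lambda>p. phi p b \<bullet> b') \<and> smooth_on U (\<lambda>p. xi p \<bullet> b) \<and>
        smooth_on U (\<lambda>p. eta p b) \<and> smooth_on U (\<lambda>p. g p b b')) \<and>
     (\<forall>p\<in>U.
        linear (phi p) \<and> linear (eta p) \<and> bilinear (g p) \<and>
        (\<forall>x y. g p x y = g p y x) \<and> (\<forall>x. x \<noteq> 0 \<longrightarrow> g p x x > 0) \<and>
        phi p (xi p) = 0 \<and>
        (\<forall>x. phi p (phi p x) = x - eta p x *\<^sub>R xi p) \<and>
        (\<forall>x. eta p (phi p x) = 0) \<and>
        eta p (xi p) = 1 \<and>
        (\<Sum>b\<in>Basis. phi p b \<bullet> b) = 0 \<and>
        (\<forall>x y. g p (phi p x) (phi p y) = g p x y - eta p x * eta p y))"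

text \<open>Levi-Civita connection of g: Christoffel term via the Koszul formula.\<close>

definition christoffel :: "('a::euclidean_space \<Rightarrow> 'a \<Rightarrow> 'a \<Rightarrow> real) \<Rightarrow> 'a \<Rightarrow> 'a \<Rightarrow> 'a \<Rightarrow> 'a" where
  "christoffel g p x y = (THE w. \<forall>z. g p w z = 1/2 *
      (frechet_derivative (\<lambda>q. g q y z) (at p) x + frechet_derivative (\<lambda>q. g q x z) (at p) y
       - frechet_derivative (\<lambda>q. g q x y) (at p) z))"

definition nabla :: "('a::euclidean_space \<Rightarrow> 'a \<Rightarrow> 'a \<Rightarrow> real) \<Rightarrow> 'a \<Rightarrow> 'a \<Rightarrow> ('a \<Rightarrow> 'a) \<Rightarrow> 'a" where
  "nabla g p x Y = frechet_derivative Y (at p) x + christoffel g p x (Y p)"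

text \<open>(nabla_x phi) y = nabla_x (phi Y) - phi (nabla_x Y), (nabla_x eta)(y) = x(eta Y) - eta(nabla_x Y),
  with Y the (constant in the chart) vector field extending y; both are tensorial.\<close>

definition nabla_phi :: "('a::euclidean_space \<Rightarrow> 'a \<Rightarrow> 'a \<Rightarrow> real) \<Rightarrow> ('a \<Rightarrow> 'a \<Rightarrow> 'a) \<Rightarrow> 'a \<Rightarrow> 'a \<Rightarrow> 'a \<Rightarrow> 'a" where
  "nabla_phi g phi p x y = nabla g p x (\<lambda>q. phi q y) - phi p (nabla g p x (\<lambda>q. y))"

definition nabla_eta :: "('a::euclidean_space \<Rightarrow> 'a \<Rightarrow> 'a \<Rightarrow> real) \<Rightarrow> ('a \<Rightarrow> 'a \<Rightarrow> real) \<Rightarrow> 'a \<Rightarrow> 'a \<Rightarrow> 'a \<Rightarrow> real" where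
  "nabla_eta g eta p x y = frechet_derivative (\<lambda>q. eta q y) (at p) x - eta p (nabla g p x (\<lambda>q. y))"

definition F_tensor :: "('a::euclidean_space \<Rightarrow> 'a \<Rightarrow> 'a \<Rightarrow> real) \<Rightarrow> ('a \<Rightarrow> 'a \<Rightarrow> 'a) \<Rightarrow> 'a \<Rightarrow> 'a \<Rightarrow> 'a \<Rightarrow> 'a \<Rightarrow> real" where
  "F_tensor g phi p x y z = g p (nabla_phi g phi p x y) z"

definition nijenhuis :: "('a::euclidean_space \<Rightarrow> 'a \<Rightarrow> 'a \<Rightarrow> real) \<Rightarrow> ('a \<Rightarrow> 'a \<Rightarrow> 'a) \<Rightarrow> ('a \<Rightarrow> 'a)
    \<Rightarrow> ('a \<Rightarrow> 'a \<Rightarrow> real) \<Rightarrow> 'a \<Rightarrow> 'a \<Rightarrow> 'a \<Rightarrow> 'a" where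
  "nijenhuis g phi xi eta p x y =
     nabla_phi g phi p (phi p x) y - phi p (nabla_phi g phi p x y) - nabla_eta g eta p x y *\<^sub>R xi p
     - nabla_phi g phi p (phi p y) x + phi p (nabla_phi g phi p y x) + nabla_eta g eta p y x *\<^sub>R xi p"

end

theory Submission
  imports Defs
begin

text \<open>At a point, \<open>N(\<phi>x,\<phi>y) = 0\<close> is a linear condition on \<open>F\<close>: since
  \<open>(\<nabla>\<^sub>x\<eta>)(y) = -F(x,\<phi>y,\<xi>)\<close>, the value \<open>g(N(\<phi>a,\<phi>b),z)\<close> is a linear expression in \<open>F\<close>
  (\<open>nijenhuis_form\<close>). A direct computation shows that it vanishes on each class \<open>F\<^sub>i\<close> of \<open>\<U>\<^sub>1\<close>.
  Conversely, if it vanishes, \<open>F\<close> is split explicitly: its horizontal part \<open>F(\<phi>\<^sup>2x,\<phi>\<^sup>2y,\<phi>\<^sup>2z)\<close>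
  satisfies the cyclic identity, so that after removing the \<open>F\<^sub>1\<close> part built from its Lee form
  it lies in \<open>F\<^sub>2\<close>; the mixed part \<open>F(\<phi>\<^sup>2x,\<phi>\<^sup>2y,\<xi>)\<close> has no \<open>F\<^sub>7\<close> component and splits into
  \<open>F\<^sub>6\<close>, \<open>F\<^sub>8\<close> and \<open>F\<^sub>9\<close> parts; the remaining terms are of type \<open>F\<^sub>1\<^sub>0\<close> and \<open>F\<^sub>1\<^sub>1\<close>
  (\<open>F\<^sub>4\<close> and \<open>F\<^sub>5\<close> are absorbed by \<open>F\<^sub>6\<close> and \<open>F\<^sub>8\<close>). On the analytic side, \<open>F\<close> and \<open>\<nabla>\<eta>\<close>
  are computed in the chart from the Koszul formula; differentiating the structure identities
  shows that \<open>F\<close> has the symmetries of the model space.\<close>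

section \<open>Tensors with the symmetries of \<open>F\<close>\<close>

definition trilinear :: "('a::real_vector \<Rightarrow> 'a \<Rightarrow> 'a \<Rightarrow> real) \<Rightarrow> bool" where
  "trilinear T \<longleftrightarrow>
     (\<forall>y z. linear (\<lambda>x. T x y z)) \<and> (\<forall>x z. linear (\<lambda>y. T x y z)) \<and> (\<forall>x y. linear (\<lambda>z. T x y z))"

lemma trilinearI:
  assumes "\<And>y z. linear (\<lambda>x. T x y z)" "\<And>x z. linear (\<lambda>y. T x y z)" "\<And>x y. linear (\<lambda>z. T x y z)"
  shows "trilinear T"
  using assms unfolding trilinear_def by blast

lemma trilinearD:
  assumes "trilinear T"
  shows "linear (\<lambda>x. T x y z)" "linear (\<lambda>y. T x y z)" "linear (\<lambda>z. T x y z)"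
  using assms unfolding trilinear_def by auto

lemma trilinear_simps:
  assumes "trilinear T"
  shows "T (x1 + x2) y z = T x1 y z + T x2 y z" "T (x1 - x2) y z = T x1 y z - T x2 y z"
    "T (c *\<^sub>R x) y z = c * T x y z" "T 0 y z = 0" "T (- x) y z = - T x y z"
    "T x (y1 + y2) z = T x y1 z + T x y2 z" "T x (y1 - y2) z = T x y1 z - T x y2 z"
    "T x (c *\<^sub>R y) z = c * T x y z" "T x 0 z = 0" "T x (- y) z = - T x y z"
    "T x y (z1 + z2) = T x y z1 + T x y z2" "T x y (z1 - z2) = T x y z1 - T x y z2"
    "T x y (c *\<^sub>R z) = c * T x y z" "T x y 0 = 0" "T x y (- z) = - T x y z"
  using linear_add[OF trilinearD(1)[OF assms]] linear_diff[OF trilinearD(1)[OF assms]]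
    linear_scale[OF trilinearD(1)[OF assms]] linear_0[OF trilinearD(1)[OF assms]]
    linear_neg[OF trilinearD(1)[OF assms]]
    linear_add[OF trilinearD(2)[OF assms]] linear_diff[OF trilinearD(2)[OF assms]]
    linear_scale[OF trilinearD(2)[OF assms]] linear_0[OF trilinearD(2)[OF assms]]
    linear_neg[OF trilinearD(2)[OF assms]]
    linear_add[OF trilinearD(3)[OF assms]] linear_diff[OF trilinearD(3)[OF assms]]
    linear_scale[OF trilinearD(3)[OF assms]] linear_0[OF trilinearD(3)[OF assms]]
    linear_neg[OF trilinearD(3)[OF assms]]
  by auto

lemma linear_expansion:
  fixes l :: "'a::euclidean_space \<Rightarrow> 'b::real_vector"
  assumes "linear l"
  shows "l w = (\<Sum>b\<in>Basis. (w \<bullet> b) *\<^sub>R l b)"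
proof -
  have "l w = l (\<Sum>b\<in>Basis. (w \<bullet> b) *\<^sub>R b)" by (simp add: euclidean_representation)
  also have "\<dots> = (\<Sum>b\<in>Basis. (w \<bullet> b) *\<^sub>R l b)"
    by (simp add: linear_sum[OF assms] linear_scale[OF assms])
  finally show ?thesis .
qed

lemma F_space_iff:
  "F_space f e t T \<longleftrightarrow> trilinear T \<and> (\<forall>x y z. T x y z = T x z y) \<and>
     (\<forall>x y z. T x y z = - T x (f y) (f z) + t y * T x e z + t z * T x y e)"
  unfolding F_space_def trilinear_def by blast

lemma F_spaceI:
  assumes "trilinear T" "\<And>x y z. T x y z = T x z y"
    "\<And>x y z. T x y z = - T x (f y) (f z) + t y * T x e z + t z * T x y e"
  shows "F_space f e t T"
  using assms unfolding F_space_iff by blast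

lemma F_spaceD:
  assumes "F_space f e t T"
  shows "trilinear T" "T x y z = T x z y"
    "T x y z = - T x (f y) (f z) + t y * T x e z + t z * T x y e"
  using assms unfolding F_space_iff by blast+

lemma F_space_diff:
  assumes "F_space f e t A" "F_space f e t B"
  shows "F_space f e t (\<lambda>x y z. A x y z - B x y z)"
proof (rule F_spaceI)
  note A = F_spaceD[OF assms(1)] and B = F_spaceD[OF assms(2)]
  show "trilinear (\<lambda>x y z. A x y z - B x y z)"
    by (intro trilinearI linearI)
      (simp_all add: trilinear_simps[OF A(1)] trilinear_simps[OF B(1)] algebra_simps)
  show "A x y z - B x y z = A x z y - B x z y" for x y z
    using A(2) B(2) by metis
  show "A x y z - B x y z = - (A x (f y) (f z) - B x (f y) (f z))
      + t y * (A x e z - B x e z) + t z * (A x y e - B x y e)" for x y z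
    using A(3)[of x y z] B(3)[of x y z] by (simp add: algebra_simps)
qed

text \<open>The value \<open>g(N(a,b),z)\<close> of the Nijenhuis tensor, written in terms of \<open>T = F\<close> by means of
  \<open>(\<nabla>\<^sub>a\<eta>)(b) = -F(a,\<phi>b,\<xi>)\<close>.\<close>

definition nijenhuis_form ::
    "('a::real_vector \<Rightarrow> 'a) \<Rightarrow> 'a \<Rightarrow> ('a \<Rightarrow> real) \<Rightarrow> ('a \<Rightarrow> 'a \<Rightarrow> 'a \<Rightarrow> real) \<Rightarrow> 'a \<Rightarrow> 'a \<Rightarrow> 'a \<Rightarrow> real" where
  "nijenhuis_form f e t T a b z =
     T (f a) b z - T a b (f z) + T a (f b) e * t z - T (f b) a z + T b a (f z) - T b (f a) e * t z"

lemma nijenhuis_form_sum: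
  "nijenhuis_form f e t (\<lambda>x y z. \<Sum>i\<in>I. A i x y z) a b z = (\<Sum>i\<in>I. nijenhuis_form f e t (A i) a b z)"
  unfolding nijenhuis_form_def by (simp add: sum.distrib sum_subtractf sum_distrib_right)

definition vertical_tensor :: "('a \<Rightarrow> 'a \<Rightarrow> real) \<Rightarrow> ('a \<Rightarrow> real) \<Rightarrow> 'a \<Rightarrow> 'a \<Rightarrow> 'a \<Rightarrow> real" where
  "vertical_tensor S t x y z = S x y * t z + S x z * t y"

section \<open>Linear algebra of a \<open>\<Pi>\<close>-structure at a point\<close>

locale pi_structure =
  fixes n :: nat and f :: "'a::euclidean_space \<Rightarrow> 'a" and e :: 'a and t :: "'a \<Rightarrow> real"
    and G :: "'a \<Rightarrow> 'a \<Rightarrow> real"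
  assumes linear_f: "linear f" and linear_t: "linear t" and bilinear_G: "bilinear G"
    and G_sym: "\<And>x y. G x y = G y x" and G_pos: "\<And>x. x \<noteq> 0 \<Longrightarrow> G x x > 0"
    and f_e: "f e = 0" and f_f: "\<And>x. f (f x) = x - t x *\<^sub>R e" and t_f: "\<And>x. t (f x) = 0"
    and t_e: "t e = 1"
    and trace_f: "(\<Sum>b\<in>Basis. f b \<bullet> b) = 0" and G_f_f: "\<And>x y. G (f x) (f y) = G x y - t x * t y"
    and dim: "DIM('a) = 2 * n + 1"
begin

lemma linear_G_left: "linear (\<lambda>x. G x y)" and linear_G_right: "linear (G x)"
  using bilinear_G unfolding bilinear_def by auto

lemmas f_simps = linear_add[OF linear_f] linear_diff[OF linear_f] linear_scale[OF linear_f]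
  linear_neg[OF linear_f] linear_0[OF linear_f]
lemmas t_simps = linear_add[OF linear_t] linear_diff[OF linear_t] linear_scale[OF linear_t]
  linear_neg[OF linear_t] linear_0[OF linear_t]
lemmas G_simps = linear_add[OF linear_G_left] linear_diff[OF linear_G_left]
  linear_scale[OF linear_G_left] linear_neg[OF linear_G_left] linear_0[OF linear_G_left]
  linear_add[OF linear_G_right] linear_diff[OF linear_G_right]
  linear_scale[OF linear_G_right] linear_neg[OF linear_G_right] linear_0[OF linear_G_right]
lemmas structure_simps = f_simps t_simps G_simps

lemma G_e_right [simp]: "G x e = t x"
  using G_f_f[of x e] by (simp add: f_e t_e G_simps)

lemma G_e_left [simp]: "G e x = t x"
  using G_e_right G_sym by metis

lemma G_f_swap: "G (f x) y = G x (f y)"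
proof -
  have "G (f x) y = G (f x) (f (f y) + t y *\<^sub>R e)" by (simp add: f_f)
  also have "\<dots> = G x (f y)" by (simp add: G_simps G_f_f t_f)
  finally show ?thesis .
qed

lemma f_f_f [simp]: "f (f (f x)) = f x"
  by (simp add: f_f f_simps f_e)

lemma G_eq_imp_eq: assumes "\<And>z. G u z = G v z" shows "u = v"
proof -
  have "G (u - v) (u - v) = 0" using assms by (simp add: G_simps)
  then show ?thesis using G_pos[of "u - v"] by auto
qed

lemma G_riesz: assumes "linear l" shows "\<exists>!w. \<forall>z. G w z = l z"
proof -
  define M where "M w = (\<Sum>b\<in>Basis. G w b *\<^sub>R b)" for w
  have linear_M: "linear M" unfolding M_def
    by (rule linearI) (simp_all add: G_simps scaleR_add_left sum.distrib scaleR_sum_right)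
  have M_inner: "M w \<bullet> b = G w b" if "b \<in> Basis" for w b
    using that unfolding M_def by (simp add: inner_sum_left inner_Basis if_distrib cong: if_cong)
  have "inj M"
  proof (rule linear_injective_0[OF linear_M, THEN iffD2], intro allI impI)
    fix w assume "M w = 0"
    then have "G w b = 0" if "b \<in> Basis" for b using M_inner[OF that, of w] by simp
    then have "G w w = 0" by (simp add: linear_expansion[OF linear_G_right, of w w])
    then show "w = 0" using G_pos by force
  qed
  then obtain w where w: "M w = (\<Sum>b\<in>Basis. l b *\<^sub>R b)"
    using linear_M linear_injective_imp_surjective by (metis surjD)
  have "G w b = l b" if "b \<in> Basis" for b
    using M_inner[OF that, of w] that unfolding w
    by (simp add: inner_sum_left inner_Basis if_distrib cong: if_cong)
  then have "\<forall>z. G w z = l z"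
    by (metis (no_types, lifting) linear_expansion[OF linear_G_right] linear_expansion[OF assms] sum.cong)
  then show ?thesis using G_eq_imp_eq by metis
qed

definition dual :: "'a \<Rightarrow> 'a" where
  "dual b = (THE w. \<forall>z. G w z = z \<bullet> b)"

lemma G_dual: "G (dual b) z = z \<bullet> b"
proof -
  have "linear (\<lambda>z. z \<bullet> b)" by (simp add: bounded_linear_inner_left bounded_linear.linear)
  from theI'[OF G_riesz[OF this]] show ?thesis unfolding dual_def by blast
qed

lemma sum_G_dual_mult: assumes "linear l" shows "(\<Sum>j\<in>Basis. G (dual j) a * l j) = l a"
  by (simp add: G_dual linear_expansion[OF assms, of a])

lemma sum_G_mult_dual_inner:
  assumes "i \<in> Basis" "k \<in> Basis"
  shows "(\<Sum>j\<in>Basis. G i j * (dual k \<bullet> j)) = (if i = k then 1 else 0)"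
proof -
  have "(\<Sum>j\<in>Basis. G i j * (dual k \<bullet> j)) = G i (dual k)"
    by (simp add: linear_expansion[OF linear_G_right, of i "dual k"] mult.commute)
  then show ?thesis using assms by (simp add: G_sym[of i] G_dual inner_Basis)
qed

lemma right_inverse_gram_eq_dual:
  assumes h: "\<forall>i\<in>Basis. \<forall>k\<in>Basis. (\<Sum>j\<in>Basis. G i j * h j k) = (if i = k then 1 else 0)"
    and k: "k \<in> Basis"
  shows "(\<Sum>j\<in>Basis. h j k *\<^sub>R j) = dual k"
proof (rule G_eq_imp_eq)
  fix z
  have "G (\<Sum>j\<in>Basis. h j k *\<^sub>R j) z = (\<Sum>j\<in>Basis. h j k * G j z)"
    by (simp add: linear_sum[OF linear_G_left] G_simps)
  also have "\<dots> = (\<Sum>j\<in>Basis. h j k * (\<Sum>b\<in>Basis. (z \<bullet> b) * G j b))"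
    by (subst linear_expansion[OF linear_G_right]) simp
  also have "\<dots> = (\<Sum>b\<in>Basis. (z \<bullet> b) * (\<Sum>j\<in>Basis. G b j * h j k))"
    unfolding sum_distrib_left by (subst sum.swap) (simp add: G_sym mult_ac)
  also have "\<dots> = (\<Sum>b\<in>Basis. (z \<bullet> b) * (if b = k then 1 else 0))"
    using h k by (intro sum.cong) auto
  also have "\<dots> = G (dual k) z"
    using k by (simp add: G_dual if_distrib cong: if_cong)
  finally show "G (\<Sum>j\<in>Basis. h j k *\<^sub>R j) z = G (dual k) z" .
qed

lemma ginv_eq_dual: assumes "i \<in> Basis" "j \<in> Basis" shows "ginv G i j = dual j \<bullet> i"
proof -
  define H where "H i j = (if i \<in> Basis \<and> j \<in> Basis then dual j \<bullet> i else 0)" for i j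
  have "ginv G = H" unfolding ginv_def
  proof (rule the_equality)
    show "(\<forall>i j. (i \<notin> Basis \<or> j \<notin> Basis) \<longrightarrow> H i j = 0) \<and>
      (\<forall>i\<in>Basis. \<forall>k\<in>Basis. (\<Sum>j\<in>Basis. G i j * H j k) = (if i = k then 1 else 0))"
      using sum_G_mult_dual_inner by (simp add: H_def cong: sum.cong)
  next
    fix h
    assume h: "(\<forall>i j. (i \<notin> Basis \<or> j \<notin> Basis) \<longrightarrow> h i j = 0) \<and>
      (\<forall>i\<in>Basis. \<forall>k\<in>Basis. (\<Sum>j\<in>Basis. G i j * h j k) = (if i = k then 1 else 0))"
    have "h i k = H i k" for i k
    proof (cases "i \<in> Basis \<and> k \<in> Basis")
      case True
      then have "h i k = (\<Sum>j\<in>Basis. h j k *\<^sub>R j) \<bullet> i"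
        by (simp add: inner_sum_left inner_Basis if_distrib cong: if_cong)
      then show ?thesis using right_inverse_gram_eq_dual[of h k] h True by (simp add: H_def)
    qed (use h in \<open>auto simp: H_def\<close>)
    then show "h = H" by blast
  qed
  then show ?thesis using assms H_def by simp
qed

lemma lee_theta_eq_sum_dual: assumes "trilinear A"
  shows "lee_theta G A z = (\<Sum>j\<in>Basis. A (dual j) j z)"
proof -
  have "lee_theta G A z = (\<Sum>j\<in>Basis. \<Sum>i\<in>Basis. (dual j \<bullet> i) * A i j z)"
    unfolding lee_theta_def by (subst sum.swap) (simp add: ginv_eq_dual)
  also have "\<dots> = (\<Sum>j\<in>Basis. A (dual j) j z)"
    by (intro sum.cong refl) (simp add: linear_expansion[OF trilinearD(1)[OF assms], of "dual _"])
  finally show ?thesis .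
qed

lemma trace_f_f: "(\<Sum>j\<in>Basis. f (f j) \<bullet> j) = 2 * real n"
proof -
  have "(\<Sum>j\<in>Basis. t j * (e \<bullet> j)) = 1"
    using linear_expansion[OF linear_t, of e] t_e by (simp add: mult.commute)
  then have "(\<Sum>j\<in>Basis. f (f j) \<bullet> j) = real DIM('a) - 1"
    by (simp add: f_f inner_diff_left sum_subtractf)
  then show ?thesis using dim by simp
qed

lemma f_eq_0_if_n_eq_0: assumes "n = 0" shows "f x = 0"
proof -
  obtain b where B: "(Basis::'a set) = {b}"
    using dim assms by (metis card_1_singletonE add_0 mult_0_right)
  have rep: "y = (y \<bullet> b) *\<^sub>R b" for y :: 'a
    using euclidean_representation[of y] unfolding B by simp
  have "f b = 0" using trace_f rep[of "f b"] unfolding B by simp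
  then show ?thesis using rep[of x] by (metis f_simps(3) scaleR_zero_right)
qed

section \<open>The Nijenhuis form on the classes of \<open>\<U>\<^sub>1\<close>\<close>

lemma nijenhuis_form_eq_0_if_vertical_first:
  assumes "\<And>c y z. A (f c) y z = 0"
  shows "nijenhuis_form f e t A (f a) (f b) z = 0"
  using assms unfolding nijenhuis_form_def by simp

lemma nijenhuis_form_vertical:
  assumes "\<And>x y z. A x y z = S x y * t z + S x z * t y"
  shows "nijenhuis_form f e t A (f a) (f b) z =
     (S (f (f a)) (f b) + S (f a) (f (f b)) - S (f (f b)) (f a) - S (f b) (f (f a))) * t z"
  unfolding nijenhuis_form_def assms by (simp add: t_f t_e algebra_simps)

lemma nijenhuis_form_F1_eq_0:
  assumes "F_space f e t A" "F_cond 1 n f e t G A"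
  shows "nijenhuis_form f e t A (f a) (f b) z = 0"
proof -
  define \<theta> where "\<theta> = lee_theta G A"
  have "linear \<theta>" unfolding \<theta>_def lee_theta_def
    by (rule linearI)
      (simp_all add: trilinear_simps[OF F_spaceD(1)[OF assms(1)]] sum.distrib sum_distrib_left algebra_simps)
  then have \<theta>_simps: "\<theta> (x + y) = \<theta> x + \<theta> y" "\<theta> (x - y) = \<theta> x - \<theta> y" "\<theta> (c *\<^sub>R x) = c * \<theta> x"
      "\<theta> 0 = 0" for x y c
    by (simp_all add: linear_add linear_diff linear_scale linear_0)
  have A: "A x y z = 1 / (2 * real n) *
        (G (f x) (f y) * \<theta> (f (f z)) + G (f x) (f z) * \<theta> (f (f y))
         - G x (f y) * \<theta> (f z) - G x (f z) * \<theta> (f y))" for x y z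
    using assms(2) unfolding F_cond_def \<theta>_def by (simp (no_asm_use); blast)
  have "G b (f a) = G a (f b)" by (metis G_sym G_f_swap)
  then show ?thesis unfolding nijenhuis_form_def A
    by (simp add: t_f f_e t_e f_f structure_simps G_f_f G_f_swap \<theta>_simps G_sym[of b a] algebra_simps)
qed

lemma cyclic_iff_nijenhuis_form_eq_0:
  assumes A: "F_space f e t A" and A_e1: "\<And>y z. A e y z = 0" and A_e2: "\<And>x z. A x e z = 0"
  shows "(\<forall>x y z. A x y (f z) + A y z (f x) + A z x (f y) = 0) \<longleftrightarrow>
         (\<forall>a b z. nijenhuis_form f e t A (f a) (f b) z = 0)"
proof -
  note A_simps = trilinear_simps[OF F_spaceD(1)[OF A]] and A_sym = F_spaceD(2)[OF A]
  have A_e3: "A x y e = 0" for x y using A_e2[of x y] A_sym[of x y e] by simp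
  have A_f_f: "A (f (f x)) y z = A x y z" "A x (f (f y)) z = A x y z" "A x y (f (f z)) = A x y z"
    for x y z by (simp_all add: f_f A_simps A_e1 A_e2 A_e3)
  have A_f: "A x (f y) (f z) = - A x y z" for x y z
    using F_spaceD(3)[OF A, of x y z] by (simp add: A_e2 A_e3)
  have A_f': "A x (f y) z = - A x y (f z)" for x y z
    using A_f[of x "f y" z] by (simp add: A_f_f)
  have N: "nijenhuis_form f e t A (f a) (f b) z =
      A a (f b) z - A (f a) (f b) (f z) - A b (f a) z + A (f b) (f a) (f z)" for a b z
    unfolding nijenhuis_form_def by (simp add: A_f_f A_e3)
  show ?thesis unfolding N
  proof (intro iffI allI)
    fix a b z
    assume H: "\<forall>x y z. A x y (f z) + A y z (f x) + A z x (f y) = 0"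
    have "A z (f b) a + A (f b) (f a) (f z) + A (f a) z b = 0"
      using H[rule_format, of z "f b" "f a"] by (simp add: A_f_f)
    then show "A a (f b) z - A (f a) (f b) (f z) - A b (f a) z + A (f b) (f a) (f z) = 0"
      using H[rule_format, of a b z] A_f'[of a b z] A_sym[of b z "f a"] A_sym[of z a "f b"]
        A_sym[of "f a" b z] A_f[of "f a" b z]
      by linarith
  next
    fix a b z
    assume H: "\<forall>a b z. A a (f b) z - A (f a) (f b) (f z) - A b (f a) z + A (f b) (f a) (f z) = 0"
    show "A a b (f z) + A b z (f a) + A z a (f b) = 0"
      using H[rule_format, of a b z] H[rule_format, of a z b] H[rule_format, of b z a]
        A_sym[of a b "f z"] A_f'[of a b z] A_sym[of b a "f z"] A_sym[of b z "f a"] A_f'[of b a z]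
        A_sym[of z a "f b"] A_f'[of z a b] A_sym[of "f a" "f b" "f z"] A_sym[of "f b" "f a" "f z"]
        A_sym[of "f z" "f a" "f b"]
      by linarith
  qed
qed

lemma nijenhuis_form_F2_eq_0:
  assumes "F_space f e t A" "F_cond 2 n f e t G A"
  shows "nijenhuis_form f e t A (f a) (f b) z = 0"
proof -
  have "A e y z = 0" "A x e z = 0" "A x y (f z) + A y z (f x) + A z x (f y) = 0" for x y z
    using assms(2) unfolding F_cond_def by simp_all
  then show ?thesis using cyclic_iff_nijenhuis_form_eq_0[OF assms(1)] by blast
qed

lemma nijenhuis_form_F4_eq_0:
  assumes "F_cond 4 n f e t G A"
  shows "nijenhuis_form f e t A (f a) (f b) z = 0"
proof -
  define k where "k = lee_theta G A e / (2 * real n)"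
  have A: "A x y z = k * (G (f x) (f y) * t z + G (f x) (f z) * t y)" for x y z
    using assms unfolding F_cond_def k_def by (simp (no_asm_use); blast)
  show ?thesis unfolding nijenhuis_form_def A
    by (simp add: t_f f_e t_e f_f structure_simps G_f_f algebra_simps G_sym[of a "f b"] G_sym[of "f a" b])
qed

lemma nijenhuis_form_F5_eq_0:
  assumes "F_cond 5 n f e t G A"
  shows "nijenhuis_form f e t A (f a) (f b) z = 0"
proof -
  define k where "k = lee_theta_star f G A e / (2 * real n)"
  have A: "A x y z = k * (G x (f y) * t z + G x (f z) * t y)" for x y z
    using assms unfolding F_cond_def k_def by (simp (no_asm_use); blast)
  show ?thesis unfolding nijenhuis_form_def A
    by (simp add: t_f f_e t_e f_f structure_simps G_f_f algebra_simps
        G_sym[of a "f b"] G_sym[of "f a" b] G_sym[of a b])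
qed

lemma nijenhuis_form_vertical_sym_eq_0:
  assumes "\<And>x y z. A x y z = A x y e * t z + A x z e * t y" "\<And>x y. A x y e = A y x e"
  shows "nijenhuis_form f e t A (f a) (f b) z = 0"
  unfolding nijenhuis_form_vertical[of A "\<lambda>x y. A x y e", OF assms(1)] by (simp add: assms(2))

lemma nijenhuis_form_F6_eq_0:
  assumes "F_cond 6 n f e t G A"
  shows "nijenhuis_form f e t A (f a) (f b) z = 0"
proof (rule nijenhuis_form_vertical_sym_eq_0)
  show "A x y z = A x y e * t z + A x z e * t y" "A x y e = A y x e" for x y z
    using assms unfolding F_cond_def by (simp (no_asm_use); blast)+
qed

lemma nijenhuis_form_F8_eq_0:
  assumes "F_cond 8 n f e t G A"
  shows "nijenhuis_form f e t A (f a) (f b) z = 0"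
proof (rule nijenhuis_form_vertical_sym_eq_0)
  show "A x y z = A x y e * t z + A x z e * t y" "A x y e = A y x e" for x y z
    using assms unfolding F_cond_def by (simp (no_asm_use); blast)+
qed

lemma nijenhuis_form_F9_eq_0:
  assumes "F_cond 9 n f e t G A"
  shows "nijenhuis_form f e t A (f a) (f b) z = 0"
proof -
  have A: "A x y z = A x y e * t z + A x z e * t y" "A x y e = - A (f x) (f y) e" for x y z
    using assms unfolding F_cond_def by (simp (no_asm_use); blast)+
  show ?thesis
    using A(2)[of "f (f a)" "f b"] A(2)[of "f (f b)" "f a"]
    unfolding nijenhuis_form_vertical[of A "\<lambda>x y. A x y e", OF A(1)] by simp
qed

lemma nijenhuis_form_F10_eq_0:
  assumes "F_cond 10 n f e t G A"
  shows "nijenhuis_form f e t A (f a) (f b) z = 0"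
proof (rule nijenhuis_form_eq_0_if_vertical_first)
  fix c y z
  have "\<forall>x y z. A x y z = - t x * A e (f y) (f z)"
    using assms unfolding F_cond_def by (simp (no_asm_use))
  then have "A (f c) y z = - t (f c) * A e (f y) (f z)" by blast
  then show "A (f c) y z = 0" by (simp add: t_f)
qed

lemma nijenhuis_form_F11_eq_0:
  assumes "F_cond 11 n f e t G A"
  shows "nijenhuis_form f e t A (f a) (f b) z = 0"
proof (rule nijenhuis_form_eq_0_if_vertical_first)
  fix c y z
  have "\<forall>x y z. A x y z = t x * (t y * lee_omega e A z + t z * lee_omega e A y)"
    using assms unfolding F_cond_def by (simp (no_asm_use))
  then have "A (f c) y z = t (f c) * (t y * lee_omega e A z + t z * lee_omega e A y)" by blast
  then show "A (f c) y z = 0" by (simp add: t_f)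
qed

lemma nijenhuis_form_eq_0_if_in_U1:
  assumes "in_class_sum U1_classes n f e t G T"
  shows "nijenhuis_form f e t T (f a) (f b) z = 0"
proof -
  obtain A where A: "\<forall>i\<in>U1_classes. F_space f e t (A i) \<and> F_cond i n f e t G (A i)"
    and T: "\<forall>x y z. T x y z = (\<Sum>i\<in>U1_classes. A i x y z)"
    using assms unfolding in_class_sum_def by blast
  have "T = (\<lambda>x y z. \<Sum>i\<in>U1_classes. A i x y z)" using T by blast
  then have "nijenhuis_form f e t T (f a) (f b) z = (\<Sum>i\<in>U1_classes. nijenhuis_form f e t (A i) (f a) (f b) z)"
    by (simp add: nijenhuis_form_sum)
  also have "\<dots> = 0"
  proof (rule sum.neutral, rule ballI)
    fix i assume i: "i \<in> U1_classes"
    then have F: "F_space f e t (A i)" and C: "F_cond i n f e t G (A i)" using A by auto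
    from i consider "i = 1" | "i = 2" | "i = 4" | "i = 5" | "i = 6" | "i = 8" | "i = 9" | "i = 10" | "i = 11"
      unfolding U1_classes_def by blast
    then show "nijenhuis_form f e t (A i) (f a) (f b) z = 0"
      using F C
      by cases (simp_all add: nijenhuis_form_F1_eq_0 nijenhuis_form_F2_eq_0 nijenhuis_form_F4_eq_0
          nijenhuis_form_F5_eq_0 nijenhuis_form_F6_eq_0 nijenhuis_form_F8_eq_0 nijenhuis_form_F9_eq_0
          nijenhuis_form_F10_eq_0 nijenhuis_form_F11_eq_0)
  qed
  finally show ?thesis .
qed

section \<open>Decomposition of \<open>F\<close> when the Nijenhuis form vanishes\<close>

lemma F_space_vertical_tensor:
  assumes S_left: "\<And>y. linear (\<lambda>x. S x y)" and S_right: "\<And>x. linear (S x)" and S_e: "\<And>x. S x e = 0"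
  shows "F_space f e t (vertical_tensor S t)"
proof (rule F_spaceI)
  show "trilinear (vertical_tensor S t)" unfolding vertical_tensor_def
    by (intro trilinearI linearI)
      (simp_all add: linear_add[OF S_left] linear_scale[OF S_left] linear_add[OF S_right]
        linear_scale[OF S_right] t_simps algebra_simps)
  show "vertical_tensor S t x y z = vertical_tensor S t x z y" for x y z
    unfolding vertical_tensor_def by simp
  show "vertical_tensor S t x y z = - vertical_tensor S t x (f y) (f z)
      + t y * vertical_tensor S t x e z + t z * vertical_tensor S t x y e" for x y z
    unfolding vertical_tensor_def by (simp add: t_f t_e S_e algebra_simps)
qed

lemma F_cond_vertical_tensor:
  assumes S_e: "\<And>x. S x e = 0"
  shows "(\<And>x y. S x y = S y x) \<Longrightarrow> (\<And>x y. S x y = S (f x) (f y)) \<Longrightarrow>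
      F_cond 6 n f e t G (vertical_tensor S t)"
    and "(\<And>x y. S x y = S y x) \<Longrightarrow> (\<And>x y. S x y = - S (f x) (f y)) \<Longrightarrow>
      F_cond 8 n f e t G (vertical_tensor S t)"
    and "(\<And>x y. S x y = - S y x) \<Longrightarrow> (\<And>x y. S x y = - S (f x) (f y)) \<Longrightarrow>
      F_cond 9 n f e t G (vertical_tensor S t)"
proof -
  show "F_cond 6 n f e t G (vertical_tensor S t)"
    if "\<And>x y. S x y = S y x" "\<And>x y. S x y = S (f x) (f y)"
    unfolding F_cond_def by (simp add: vertical_tensor_def S_e t_e) (use that in blast)
  show "F_cond 8 n f e t G (vertical_tensor S t)"
    if "\<And>x y. S x y = S y x" "\<And>x y. S x y = - S (f x) (f y)"
    unfolding F_cond_def by (simp add: vertical_tensor_def S_e t_e) (use that in blast)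
  show "F_cond 9 n f e t G (vertical_tensor S t)"
    if "\<And>x y. S x y = - S y x" "\<And>x y. S x y = - S (f x) (f y)"
    unfolding F_cond_def by (simp add: vertical_tensor_def S_e t_e) (use that in blast)
qed

context
  fixes T :: "'a \<Rightarrow> 'a \<Rightarrow> 'a \<Rightarrow> real"
  assumes F_T: "F_space f e t T"
    and nijenhuis_T: "\<And>a b z. nijenhuis_form f e t T (f a) (f b) z = 0"
begin

lemmas T_simps = trilinear_simps[OF F_spaceD(1)[OF F_T]]

lemma T_sym: "T x y z = T x z y"
  using F_spaceD(2)[OF F_T] .

lemma T_f: "T x y z = - T x (f y) (f z) + t y * T x e z + t z * T x y e"
  using F_spaceD(3)[OF F_T] .

lemma T_e_e: "T x e e = 0"
  using T_f[of x e e] by (simp add: f_e t_e T_simps)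

definition horizontal_part :: "'a \<Rightarrow> 'a \<Rightarrow> 'a \<Rightarrow> real" where
  "horizontal_part x y z = T (f (f x)) (f (f y)) (f (f z))"

lemma trilinear_horizontal_part: "trilinear horizontal_part"
  unfolding horizontal_part_def by (intro trilinearI linearI) (simp_all add: f_simps T_simps)

lemma horizontal_part_e: "horizontal_part e y z = 0" "horizontal_part x e z = 0" "horizontal_part x y e = 0"
  unfolding horizontal_part_def by (simp_all add: f_e f_simps T_simps)

lemma F_space_horizontal_part: "F_space f e t horizontal_part"
proof (rule F_spaceI[OF trilinear_horizontal_part])
  show "horizontal_part x y z = horizontal_part x z y" for x y z
    unfolding horizontal_part_def by (rule T_sym)
  show "horizontal_part x y z = - horizontal_part x (f y) (f z)
      + t y * horizontal_part x e z + t z * horizontal_part x y e" for x y z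
    using T_f[of "f (f x)" "f y" "f z"] by (simp add: horizontal_part_def f_e f_simps T_simps t_f)
qed

lemma cyclic_horizontal_part:
  "horizontal_part x y (f z) + horizontal_part y z (f x) + horizontal_part z x (f y) = 0"
proof -
  have "nijenhuis_form f e t horizontal_part (f a) (f b) z = 0" for a b z
    using nijenhuis_T[of a b "f (f z)"]
    by (simp add: nijenhuis_form_def horizontal_part_def t_f f_e f_simps T_simps)
  then show ?thesis
    using cyclic_iff_nijenhuis_form_eq_0[OF F_space_horizontal_part horizontal_part_e(1,2)] by blast
qed

definition theta_hor :: "'a \<Rightarrow> real" where
  "theta_hor = lee_theta G horizontal_part"

lemma linear_theta_hor: "linear theta_hor"
  unfolding theta_hor_def lee_theta_def
  by (rule linearI)
    (simp_all add: trilinear_simps[OF trilinear_horizontal_part] distrib_left sum.distrib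
      sum_distrib_left mult.left_commute)

lemmas theta_hor_simps = linear_add[OF linear_theta_hor] linear_diff[OF linear_theta_hor]
  linear_scale[OF linear_theta_hor] linear_0[OF linear_theta_hor] linear_neg[OF linear_theta_hor]

lemma theta_hor_f_f: "theta_hor (f (f z)) = theta_hor z"
  unfolding theta_hor_def lee_theta_def horizontal_part_def by simp

lemma theta_hor_eq_0_if_n_eq_0: "n = 0 \<Longrightarrow> theta_hor z = 0"
  unfolding theta_hor_def lee_theta_def horizontal_part_def by (simp add: f_eq_0_if_n_eq_0 T_simps)

text \<open>For \<open>n = 0\<close> the factor \<open>1 / (2 * real n)\<close> is \<open>0\<close> in HOL; then \<open>f = 0\<close>, so that \<open>theta_hor\<close>
  vanishes as well and the horizontal part is entirely of type \<open>F\<^sub>2\<close>.\<close>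

definition F1_part :: "'a \<Rightarrow> 'a \<Rightarrow> 'a \<Rightarrow> real" where
  "F1_part x y z = 1 / (2 * real n) *
     (G (f x) (f y) * theta_hor (f (f z)) + G (f x) (f z) * theta_hor (f (f y))
      - G x (f y) * theta_hor (f z) - G x (f z) * theta_hor (f y))"

lemma trilinear_F1_part: "trilinear F1_part"
  unfolding F1_part_def
  by (intro trilinearI linearI) (simp_all add: structure_simps theta_hor_simps algebra_simps)

lemma F1_part_e: "F1_part e y z = 0" "F1_part x e z = 0" "F1_part x y e = 0"
  unfolding F1_part_def by (simp_all add: f_e structure_simps theta_hor_simps t_f)

lemma F_space_F1_part: "F_space f e t F1_part"
proof (rule F_spaceI[OF trilinear_F1_part])
  show "F1_part x y z = F1_part x z y" for x y z
    unfolding F1_part_def by (simp add: algebra_simps)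
  show "F1_part x y z = - F1_part x (f y) (f z) + t y * F1_part x e z + t z * F1_part x y e" for x y z
    unfolding F1_part_e unfolding F1_part_def
    by (simp add: G_f_swap f_f structure_simps theta_hor_simps t_f f_e algebra_simps)
qed

lemma lee_theta_F1_part: "lee_theta G F1_part w = 1 / (2 * real n) * (2 * real n) * theta_hor w"
proof -
  have "linear (\<lambda>x. theta_hor (f x))" "linear (\<lambda>x. theta_hor (f (f x)))"
    using linear_compose[OF linear_f linear_theta_hor] linear_compose[OF linear_f] by (auto simp: o_def)
  note dual_contract = this[THEN sum_G_dual_mult]
  have "(\<Sum>j\<in>Basis. G (f (dual j)) (f j)) = 2 * real n"
    using trace_f_f by (simp add: G_f_swap G_dual)
  moreover have "(\<Sum>j\<in>Basis. G (f (dual j)) (f w) * theta_hor (f (f j))) = theta_hor (f (f w))"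
    using dual_contract(2)[of "f (f w)"] by (simp add: G_f_swap)
  moreover have "(\<Sum>j\<in>Basis. G (dual j) (f j)) = 0"
    using trace_f by (simp add: G_dual)
  moreover have "(\<Sum>j\<in>Basis. G (dual j) (f w) * theta_hor (f j)) = theta_hor (f (f w))"
    using dual_contract(1)[of "f w"] by simp
  moreover have "lee_theta G F1_part w = 1 / (2 * real n) *
      ((\<Sum>j\<in>Basis. G (f (dual j)) (f j)) * theta_hor (f (f w))
      + (\<Sum>j\<in>Basis. G (f (dual j)) (f w) * theta_hor (f (f j)))
      - (\<Sum>j\<in>Basis. G (dual j) (f j)) * theta_hor (f w)
      - (\<Sum>j\<in>Basis. G (dual j) (f w) * theta_hor (f j)))"
    unfolding lee_theta_eq_sum_dual[OF trilinear_F1_part] F1_part_def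
    by (simp add: sum_distrib_left sum_distrib_right sum.distrib sum_subtractf algebra_simps)
  ultimately show ?thesis by (simp add: theta_hor_f_f)
qed

lemma F_cond_F1_part: "F_cond 1 n f e t G F1_part"
proof (cases "n = 0")
  case True
  then show ?thesis unfolding F_cond_def F1_part_def by simp
next
  case False
  then have "lee_theta G F1_part w = theta_hor w" for w using lee_theta_F1_part by simp
  then show ?thesis unfolding F_cond_def by (simp add: F1_part_def theta_hor_f_f)
qed

lemma cyclic_F1_part: "F1_part x y (f z) + F1_part y z (f x) + F1_part z x (f y) = 0"
proof -
  have "G y x = G x y" "G z x = G x z" "G z y = G y z"
     "G y (f x) = G x (f y)" "G z (f x) = G x (f z)" "G z (f y) = G y (f z)"
    by (simp_all add: G_sym) (metis G_sym G_f_swap)+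
  then show ?thesis unfolding F1_part_def
    by (simp add: G_f_swap f_f structure_simps theta_hor_simps t_f f_e algebra_simps)
qed

definition F2_part :: "'a \<Rightarrow> 'a \<Rightarrow> 'a \<Rightarrow> real" where
  "F2_part x y z = horizontal_part x y z - F1_part x y z"

lemma F_space_F2_part: "F_space f e t F2_part"
  unfolding F2_part_def[abs_def] by (rule F_space_diff[OF F_space_horizontal_part F_space_F1_part])

lemma F_cond_F2_part: "F_cond 2 n f e t G F2_part"
proof -
  have "lee_theta G F2_part z = lee_theta G horizontal_part z - lee_theta G F1_part z" for z
    unfolding lee_theta_def F2_part_def by (simp add: sum_subtractf algebra_simps)
  also have "\<dots> z = 0" for z
    using lee_theta_F1_part[of z] theta_hor_eq_0_if_n_eq_0[of z]
    by (cases "n = 0") (simp_all add: theta_hor_def)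
  finally have "lee_theta G F2_part z = 0" for z .
  moreover have "F2_part x y (f z) + F2_part y z (f x) + F2_part z x (f y) = 0" for x y z
    using cyclic_horizontal_part[of x y z] cyclic_F1_part[of x y z] unfolding F2_part_def by simp
  ultimately show ?thesis unfolding F_cond_def
    by (simp add: F2_part_def horizontal_part_e F1_part_e)
qed

definition mixed_part :: "'a \<Rightarrow> 'a \<Rightarrow> real" where
  "mixed_part x y = T (f (f x)) (f (f y)) e"

lemma linear_mixed_part: "linear (\<lambda>x. mixed_part x y)" "linear (mixed_part x)"
  unfolding mixed_part_def by (rule linearI; simp add: T_simps f_simps)+

lemmas mixed_part_simps =
  linear_add[OF linear_mixed_part(1)] linear_diff[OF linear_mixed_part(1)]
  linear_scale[OF linear_mixed_part(1)] linear_0[OF linear_mixed_part(1)]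
  linear_add[OF linear_mixed_part(2)] linear_diff[OF linear_mixed_part(2)]
  linear_scale[OF linear_mixed_part(2)] linear_0[OF linear_mixed_part(2)]

lemma mixed_part_e: "mixed_part x e = 0" "mixed_part e y = 0"
  unfolding mixed_part_def by (simp_all add: f_e f_simps T_simps)

lemma mixed_part_f_f: "mixed_part (f (f x)) y = mixed_part x y" "mixed_part x (f (f y)) = mixed_part x y"
  unfolding mixed_part_def by simp_all

lemma mixed_part_F7_free: "mixed_part x y - mixed_part y x + mixed_part (f x) (f y) - mixed_part (f y) (f x) = 0"
  using nijenhuis_T[of x "f y" e] by (simp add: nijenhuis_form_def mixed_part_def f_e t_e T_simps f_simps)

text \<open>The mixed part splits along the eigenspaces of transposition and of \<open>(x,y) \<mapsto> (f x, f y)\<close>;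
  the antisymmetric \<open>f\<close>-invariant component, of type \<open>F\<^sub>7\<close>, vanishes by \<open>mixed_part_F7_free\<close>.\<close>

definition F6_form :: "'a \<Rightarrow> 'a \<Rightarrow> real" where
  "F6_form x y = (mixed_part x y + mixed_part y x + mixed_part (f x) (f y) + mixed_part (f y) (f x)) / 4"

definition F8_form :: "'a \<Rightarrow> 'a \<Rightarrow> real" where
  "F8_form x y = (mixed_part x y + mixed_part y x - mixed_part (f x) (f y) - mixed_part (f y) (f x)) / 4"

definition F9_form :: "'a \<Rightarrow> 'a \<Rightarrow> real" where
  "F9_form x y = (mixed_part x y - mixed_part y x - mixed_part (f x) (f y) + mixed_part (f y) (f x)) / 4"

lemma mixed_part_decomposition: "mixed_part x y = F6_form x y + F8_form x y + F9_form x y"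
  using mixed_part_F7_free[of x y] unfolding F6_form_def F8_form_def F9_form_def by (simp add: field_simps)

lemma linear_F6_F8_F9_form:
  "linear (\<lambda>x. F6_form x y)" "linear (F6_form x)" "linear (\<lambda>x. F8_form x y)" "linear (F8_form x)"
  "linear (\<lambda>x. F9_form x y)" "linear (F9_form x)"
  unfolding F6_form_def F8_form_def F9_form_def
  by (rule linearI; simp add: mixed_part_simps f_simps field_simps)+

lemma F6_F8_F9_form_e: "F6_form x e = 0" "F8_form x e = 0" "F9_form x e = 0"
  unfolding F6_form_def F8_form_def F9_form_def by (simp_all add: mixed_part_e f_e mixed_part_simps)

lemma F_space_F6_F8_F9_part:
  "F_space f e t (vertical_tensor F6_form t)" "F_space f e t (vertical_tensor F8_form t)"
  "F_space f e t (vertical_tensor F9_form t)"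
  using linear_F6_F8_F9_form F6_F8_F9_form_e by (auto intro: F_space_vertical_tensor)

lemma F_cond_F6_F8_F9_part:
  "F_cond 6 n f e t G (vertical_tensor F6_form t)" "F_cond 8 n f e t G (vertical_tensor F8_form t)"
  "F_cond 9 n f e t G (vertical_tensor F9_form t)"
proof -
  show "F_cond 6 n f e t G (vertical_tensor F6_form t)"
    by (rule F_cond_vertical_tensor(1))
      (simp_all add: F6_form_def mixed_part_e mixed_part_simps f_e mixed_part_f_f algebra_simps)
  show "F_cond 8 n f e t G (vertical_tensor F8_form t)"
    by (rule F_cond_vertical_tensor(2))
      (simp_all add: F8_form_def mixed_part_e mixed_part_simps f_e mixed_part_f_f field_simps)
  show "F_cond 9 n f e t G (vertical_tensor F9_form t)"
    by (rule F_cond_vertical_tensor(3))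
      (simp_all add: F9_form_def mixed_part_e mixed_part_simps f_e mixed_part_f_f field_simps)
qed

definition F10_part :: "'a \<Rightarrow> 'a \<Rightarrow> 'a \<Rightarrow> real" where
  "F10_part x y z = - t x * T e (f y) (f z)"

lemma F_space_F10_part: "F_space f e t F10_part"
proof (rule F_spaceI)
  show "trilinear F10_part" unfolding F10_part_def
    by (intro trilinearI linearI) (simp_all add: T_simps f_simps t_simps algebra_simps)
  show "F10_part x y z = F10_part x z y" for x y z
    unfolding F10_part_def using T_sym by simp
  show "F10_part x y z = - F10_part x (f y) (f z) + t y * F10_part x e z + t z * F10_part x y e" for x y z
    unfolding F10_part_def using T_f[of e "f y" "f z"] by (simp add: f_e T_simps t_f)
qed

lemma F_cond_F10_part: "F_cond 10 n f e t G F10_part"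
proof -
  have "T e (f (f y)) (f (f z)) = - T e (f y) (f z)" for y z
    using T_f[of e "f y" "f z"] by (simp add: t_f)
  then show ?thesis unfolding F_cond_def F10_part_def by (simp add: t_e)
qed

definition F11_part :: "'a \<Rightarrow> 'a \<Rightarrow> 'a \<Rightarrow> real" where
  "F11_part x y z = t x * (t y * T e e z + t z * T e e y)"

lemma F_space_F11_part: "F_space f e t F11_part"
proof (rule F_spaceI)
  show "trilinear F11_part" unfolding F11_part_def
    by (intro trilinearI linearI) (simp_all add: T_simps f_simps t_simps algebra_simps)
  show "F11_part x y z = F11_part x z y" for x y z
    unfolding F11_part_def by (simp add: algebra_simps)
  show "F11_part x y z = - F11_part x (f y) (f z) + t y * F11_part x e z + t z * F11_part x y e" for x y z
    unfolding F11_part_def by (simp add: t_e t_f T_e_e algebra_simps)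
qed

lemma F_cond_F11_part: "F_cond 11 n f e t G F11_part"
  unfolding F_cond_def F11_part_def lee_omega_def by (simp add: t_e T_e_e)

lemma T_decomposition:
  "T x y z = horizontal_part x y z + vertical_tensor mixed_part t x y z + F10_part x y z + F11_part x y z"
proof -
  have "T x y z = T (f (f x) + t x *\<^sub>R e) y z" by (simp add: f_f)
  also have "\<dots> = T (f (f x)) y z + t x * T e y z" by (simp only: T_simps)
  also have "T (f (f x)) y z = T (f (f x)) (f (f y) + t y *\<^sub>R e) (f (f z) + t z *\<^sub>R e)"
    by (simp add: f_f)
  also have "\<dots> = T (f (f x)) (f (f y)) (f (f z)) + t z * T (f (f x)) (f (f y)) e
      + t y * T (f (f x)) e (f (f z)) + t y * t z * T (f (f x)) e e"
    by (simp add: T_simps algebra_simps)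
  also have "T e y z = - T e (f y) (f z) + t y * T e e z + t z * T e e y"
    using T_f[of e y z] T_sym[of e y e] by simp
  finally show ?thesis
    unfolding horizontal_part_def vertical_tensor_def mixed_part_def F10_part_def F11_part_def
    using T_e_e T_sym[of "f (f x)" e "f (f z)"] by (simp add: algebra_simps)
qed

lemma in_U1_if_nijenhuis_form_eq_0: "in_class_sum U1_classes n f e t G T"
proof -
  define A where "A i = (if i = 1 then F1_part else if i = 2 then F2_part
     else if i = 6 then vertical_tensor F6_form t else if i = 8 then vertical_tensor F8_form t
     else if i = 9 then vertical_tensor F9_form t else if i = 10 then F10_part
     else if i = 11 then F11_part else (\<lambda>x y z. 0))" for i :: nat
  have "F_space f e t (\<lambda>x y z. 0)" "F_cond 4 n f e t G (\<lambda>x y z. 0)" "F_cond 5 n f e t G (\<lambda>x y z. 0)"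
    unfolding F_space_def F_cond_def lee_theta_def lee_theta_star_def by (simp_all add: linear_zero)
  then have "\<forall>i\<in>U1_classes. F_space f e t (A i) \<and> F_cond i n f e t G (A i)"
    unfolding U1_classes_def A_def
    using F_space_F1_part F_cond_F1_part F_space_F2_part F_cond_F2_part F_space_F6_F8_F9_part
      F_cond_F6_F8_F9_part F_space_F10_part F_cond_F10_part F_space_F11_part F_cond_F11_part
    by simp
  moreover have "T x y z = (\<Sum>i\<in>U1_classes. A i x y z)" for x y z
    using T_decomposition[of x y z] mixed_part_decomposition
    by (simp add: U1_classes_def A_def F2_part_def vertical_tensor_def algebra_simps)
  ultimately show ?thesis unfolding in_class_sum_def by blast
qed

end

theorem in_U1_iff_nijenhuis_form_eq_0:
  assumes "F_space f e t T"
  shows "in_class_sum U1_classes n f e t G T \<longleftrightarrow> (\<forall>a b z. nijenhuis_form f e t T (f a) (f b) z = 0)"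
  using nijenhuis_form_eq_0_if_in_U1 in_U1_if_nijenhuis_form_eq_0[OF assms] by blast

end


section \<open>\<open>F\<close> and \<open>N\<close> in a chart\<close>

lemma riem_pi_manifold_pi_structure:
  assumes "riem_pi_manifold n U phi xi eta g" "q \<in> U"
  shows "pi_structure n (phi q) (xi q) (eta q) (g q)"
  using assms unfolding riem_pi_manifold_def pi_structure_def by blast

lemma smooth_on_imp_differentiable_at:
  assumes "smooth_on U h" "open U" "p \<in> U"
  shows "h differentiable (at p)"
proof -
  from assms(1) have "h differentiable_on U" by (cases rule: smooth_on.cases) auto
  then show ?thesis using assms differentiable_on_eq_differentiable_at by blast
qed

lemma has_derivative_linear_family:
  fixes L :: "'a::euclidean_space \<Rightarrow> 'a \<Rightarrow> 'b::real_normed_vector" and u :: "'a \<Rightarrow> 'a"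
  assumes U: "open U" "p \<in> U" and lin: "\<And>q. q \<in> U \<Longrightarrow> linear (L q)"
    and dL: "\<And>b. b \<in> Basis \<Longrightarrow> (\<lambda>q. L q b) differentiable (at p)"
    and du: "(u has_derivative u') (at p)"
  shows "((\<lambda>q. L q (u q)) has_derivative
    (\<lambda>h. L p (u' h) + (\<Sum>b\<in>Basis. (u p \<bullet> b) *\<^sub>R frechet_derivative (\<lambda>q. L q b) (at p) h))) (at p)"
proof -
  have expansion: "((\<lambda>q. \<Sum>b\<in>Basis. (u q \<bullet> b) *\<^sub>R L q b) has_derivative
     (\<lambda>h. \<Sum>b\<in>Basis. (u p \<bullet> b) *\<^sub>R frechet_derivative (\<lambda>q. L q b) (at p) h + (u' h \<bullet> b) *\<^sub>R L p b)) (at p)"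
    by (intro has_derivative_sum has_derivative_scaleR du frechet_derivative_works[THEN iffD1, OF dL]
        bounded_linear.has_derivative[OF bounded_linear_inner_left])
  have rhs: "(\<lambda>h. \<Sum>b\<in>Basis. (u p \<bullet> b) *\<^sub>R frechet_derivative (\<lambda>q. L q b) (at p) h + (u' h \<bullet> b) *\<^sub>R L p b)
     = (\<lambda>h. L p (u' h) + (\<Sum>b\<in>Basis. (u p \<bullet> b) *\<^sub>R frechet_derivative (\<lambda>q. L q b) (at p) h))"
    by (rule ext) (simp add: sum.distrib linear_expansion[OF lin[OF U(2)], of "u' _"])
  show ?thesis
    by (rule has_derivative_transform_within_open[OF has_derivative_eq_rhs[OF expansion rhs] U])
      (simp add: linear_expansion[OF lin] del: euclidean_representation)
qed

lemma has_derivative_bilinear_family: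
  fixes B :: "'a::euclidean_space \<Rightarrow> 'a \<Rightarrow> 'a \<Rightarrow> real" and u v :: "'a \<Rightarrow> 'a"
  assumes U: "open U" "p \<in> U" and bil: "\<And>q. q \<in> U \<Longrightarrow> bilinear (B q)"
    and dB: "\<And>b c. b \<in> Basis \<Longrightarrow> c \<in> Basis \<Longrightarrow> (\<lambda>q. B q b c) differentiable (at p)"
    and du: "(u has_derivative u') (at p)" and dv: "(v has_derivative v') (at p)"
  shows "((\<lambda>q. B q (u q) (v q)) has_derivative
    (\<lambda>h. B p (u' h) (v p) + B p (u p) (v' h) + (\<Sum>b\<in>Basis. \<Sum>c\<in>Basis. (u p \<bullet> b) * (v p \<bullet> c) * frechet_derivative (\<lambda>q. B q b c) (at p) h))) (at p)"
proof -
  have l1: "linear (B q w)" and l2: "linear (\<lambda>w. B q w z)" if "q \<in> U" for q w z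
    using bil[OF that] unfolding bilinear_def by auto
  have db: "((\<lambda>q. B q b (v q)) has_derivative
    (\<lambda>h. B p b (v' h) + (\<Sum>c\<in>Basis. (v p \<bullet> c) *\<^sub>R frechet_derivative (\<lambda>q. B q b c) (at p) h))) (at p)"
    if "b \<in> Basis" for b
    by (rule has_derivative_linear_family[OF U l1 dB[OF that] dv])
  have d: "((\<lambda>q. B q (u q) (v q)) has_derivative
    (\<lambda>h. B p (u' h) (v p) + (\<Sum>b\<in>Basis. (u p \<bullet> b) *\<^sub>R frechet_derivative (\<lambda>q. B q b (v q)) (at p) h))) (at p)"
  proof -
    have dd: "(\<lambda>q. B q b (v q)) differentiable (at p)" if "b \<in> Basis" for b
      using db[OF that] unfolding differentiable_def by blast
    show ?thesis by (rule has_derivative_linear_family[where L="\<lambda>q w. B q w (v q)", OF U l2 dd du])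
  qed
  have fd: "frechet_derivative (\<lambda>q. B q b (v q)) (at p) = (\<lambda>h. B p b (v' h) + (\<Sum>c\<in>Basis. (v p \<bullet> c) *\<^sub>R frechet_derivative (\<lambda>q. B q b c) (at p) h))"
    if "b \<in> Basis" for b using frechet_derivative_at[OF db[OF that]] by simp
  show ?thesis
  proof (rule has_derivative_eq_rhs[OF d], rule ext)
    fix h
    have "(\<Sum>b\<in>Basis. (u p \<bullet> b) *\<^sub>R frechet_derivative (\<lambda>q. B q b (v q)) (at p) h)
       = (\<Sum>b\<in>Basis. (u p \<bullet> b) * B p b (v' h)) + (\<Sum>b\<in>Basis. \<Sum>c\<in>Basis. (u p \<bullet> b) * (v p \<bullet> c) * frechet_derivative (\<lambda>q. B q b c) (at p) h)"
      by (simp add: fd sum.distrib sum_distrib_left algebra_simps)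
    also have "(\<Sum>b\<in>Basis. (u p \<bullet> b) * B p b (v' h)) = B p (u p) (v' h)"
      using linear_expansion[OF l2[OF U(2)], of "u p" "v' h"] by simp
    finally show "B p (u' h) (v p) + (\<Sum>b\<in>Basis. (u p \<bullet> b) *\<^sub>R frechet_derivative (\<lambda>q. B q b (v q)) (at p) h) =
      B p (u' h) (v p) + B p (u p) (v' h) + (\<Sum>b\<in>Basis. \<Sum>c\<in>Basis. (u p \<bullet> b) * (v p \<bullet> c) * frechet_derivative (\<lambda>q. B q b c) (at p) h)"
      by simp
  qed
qed



context
  fixes n :: nat and U :: "'a::euclidean_space set" and phi :: "'a \<Rightarrow> 'a \<Rightarrow> 'a" and xi :: "'a \<Rightarrow> 'a"
    and eta :: "'a \<Rightarrow> 'a \<Rightarrow> real" and g :: "'a \<Rightarrow> 'a \<Rightarrow> 'a \<Rightarrow> real" and p :: 'a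
  assumes M: "riem_pi_manifold n U phi xi eta g" and p_U: "p \<in> U"
begin

interpretation P: pi_structure n "phi p" "xi p" "eta p" "g p"
  using riem_pi_manifold_pi_structure[OF M p_U] .

lemma open_U: "open U"
  using M unfolding riem_pi_manifold_def by blast

lemma linear_phi: "q \<in> U \<Longrightarrow> linear (phi q)"
  by (rule pi_structure.linear_f[OF riem_pi_manifold_pi_structure[OF M]])

lemma linear_eta: "q \<in> U \<Longrightarrow> linear (eta q)"
  by (rule pi_structure.linear_t[OF riem_pi_manifold_pi_structure[OF M]])

lemma bilinear_g: "q \<in> U \<Longrightarrow> bilinear (g q)"
  by (rule pi_structure.bilinear_G[OF riem_pi_manifold_pi_structure[OF M]])

lemma differentiable_at_p:
  shows "b \<in> Basis \<Longrightarrow> (\<lambda>q. phi q b) differentiable (at p)"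
    and "xi differentiable (at p)"
    and "b \<in> Basis \<Longrightarrow> (\<lambda>q. eta q b) differentiable (at p)"
    and "b \<in> Basis \<Longrightarrow> c \<in> Basis \<Longrightarrow> (\<lambda>q. g q b c) differentiable (at p)"
proof -
  have S: "\<forall>b\<in>Basis. \<forall>b'\<in>Basis. smooth_on U (\<lambda>q. phi q b \<bullet> b') \<and> smooth_on U (\<lambda>q. xi q \<bullet> b) \<and>
      smooth_on U (\<lambda>q. eta q b) \<and> smooth_on U (\<lambda>q. g q b b')"
    using M unfolding riem_pi_manifold_def by (elim conjE) assumption
  have diff: "h differentiable (at p)" if "smooth_on U h" for h
    using smooth_on_imp_differentiable_at[OF that open_U p_U] .
  show "(\<lambda>q. phi q b) differentiable (at p)" if "b \<in> Basis"
    using differentiable_componentwise_within[of "\<lambda>q. phi q b" p UNIV] S that by (blast intro: diff)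
  show "xi differentiable (at p)"
    using differentiable_componentwise_within[of xi p UNIV] S by (blast intro: diff)
  show "(\<lambda>q. eta q b) differentiable (at p)" if "b \<in> Basis"
    using S that by (blast intro: diff)
  show "(\<lambda>q. g q b c) differentiable (at p)" if "b \<in> Basis" "c \<in> Basis"
    using S that by (blast intro: diff)
qed

definition d_phi :: "'a \<Rightarrow> 'a \<Rightarrow> 'a" where
  "d_phi h y = (\<Sum>b\<in>Basis. (y \<bullet> b) *\<^sub>R frechet_derivative (\<lambda>q. phi q b) (at p) h)"

definition d_xi :: "'a \<Rightarrow> 'a" where
  "d_xi = frechet_derivative xi (at p)"

definition d_eta :: "'a \<Rightarrow> 'a \<Rightarrow> real" where
  "d_eta h y = (\<Sum>b\<in>Basis. (y \<bullet> b) *\<^sub>R frechet_derivative (\<lambda>q. eta q b) (at p) h)"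

definition d_g :: "'a \<Rightarrow> 'a \<Rightarrow> 'a \<Rightarrow> real" where
  "d_g h y z = (\<Sum>b\<in>Basis. \<Sum>c\<in>Basis. (y \<bullet> b) * (z \<bullet> c) * frechet_derivative (\<lambda>q. g q b c) (at p) h)"

lemma has_derivative_phi_apply:
  "(u has_derivative u') (at p) \<Longrightarrow>
    ((\<lambda>q. phi q (u q)) has_derivative (\<lambda>h. phi p (u' h) + d_phi h (u p))) (at p)"
  unfolding d_phi_def by (rule has_derivative_linear_family[OF open_U p_U linear_phi differentiable_at_p(1)])

lemma has_derivative_eta_apply:
  "(u has_derivative u') (at p) \<Longrightarrow>
    ((\<lambda>q. eta q (u q)) has_derivative (\<lambda>h. eta p (u' h) + d_eta h (u p))) (at p)"
  unfolding d_eta_def by (rule has_derivative_linear_family[OF open_U p_U linear_eta differentiable_at_p(3)])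

lemma has_derivative_g_apply:
  "(u has_derivative u') (at p) \<Longrightarrow> (v has_derivative v') (at p) \<Longrightarrow>
    ((\<lambda>q. g q (u q) (v q)) has_derivative (\<lambda>h. g p (u' h) (v p) + g p (u p) (v' h) + d_g h (u p) (v p))) (at p)"
  unfolding d_g_def by (rule has_derivative_bilinear_family[OF open_U p_U bilinear_g differentiable_at_p(4)])

lemma has_derivative_xi: "(xi has_derivative d_xi) (at p)"
  unfolding d_xi_def using differentiable_at_p(2) frechet_derivative_works by blast

lemma has_derivative_phi_const: "((\<lambda>q. phi q y) has_derivative (\<lambda>h. d_phi h y)) (at p)"
  using has_derivative_phi_apply[OF has_derivative_const[of y]] by (simp add: P.f_simps)

lemma has_derivative_eta_const: "((\<lambda>q. eta q y) has_derivative (\<lambda>h. d_eta h y)) (at p)"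
  using has_derivative_eta_apply[OF has_derivative_const[of y]] by (simp add: P.t_simps)

lemma has_derivative_g_const: "((\<lambda>q. g q y z) has_derivative (\<lambda>h. d_g h y z)) (at p)"
  using has_derivative_g_apply[OF has_derivative_const[of y] has_derivative_const[of z]] by (simp add: P.G_simps)

lemma derivative_eq_if_eq_on_U:
  assumes "(f1 has_derivative f1') (at p)" "(f2 has_derivative f2') (at p)" "\<And>q. q \<in> U \<Longrightarrow> f1 q = f2 q"
  shows "f1' = f2'"
  using has_derivative_transform_within_open[OF assms(1) open_U p_U assms(3)] assms(2)
    has_derivative_unique by blast

lemma linear_d_phi: "linear (\<lambda>h. d_phi h y)" "linear (d_phi h)"
proof -
  show "linear (\<lambda>h. d_phi h y)" using has_derivative_linear[OF has_derivative_phi_const] .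
  show "linear (d_phi h)" unfolding d_phi_def
    by (rule linearI) (simp_all add: inner_add_left scaleR_add_left sum.distrib scaleR_sum_right)
qed

lemmas d_phi_simps = linear_add[OF linear_d_phi(1)] linear_scale[OF linear_d_phi(1)]
  linear_add[OF linear_d_phi(2)] linear_scale[OF linear_d_phi(2)]

lemma trilinear_d_g: "trilinear d_g"
proof (rule trilinearI)
  show "linear (\<lambda>h. d_g h y z)" for y z using has_derivative_linear[OF has_derivative_g_const] .
  show "linear (\<lambda>y. d_g h y z)" "linear (\<lambda>z. d_g h y z)" for h y z unfolding d_g_def
    by (rule linearI; simp add: inner_add_left algebra_simps sum.distrib sum_distrib_left)+
qed

lemma d_g_sym: "d_g h y z = d_g h z y"
proof -
  have "(\<lambda>h. d_g h y z) = (\<lambda>h. d_g h z y)"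
    by (rule derivative_eq_if_eq_on_U[OF has_derivative_g_const has_derivative_g_const])
      (rule pi_structure.G_sym[OF riem_pi_manifold_pi_structure[OF M]])
  then show ?thesis by metis
qed

text \<open>Differentiating \<open>g(\<phi>y,z) = g(y,\<phi>z)\<close>, \<open>\<phi>\<^sup>2 = I - \<eta>\<otimes>\<xi>\<close>, \<open>\<phi>\<xi> = 0\<close> and \<open>g(\<xi>,\<xi>) = 1\<close>.\<close>

lemma d_g_phi_swap: "d_g h (phi p y) z + g p (d_phi h y) z = d_g h y (phi p z) + g p y (d_phi h z)"
proof -
  have "(\<lambda>h. g p (d_phi h y) z + g p (phi p y) 0 + d_g h (phi p y) z)
      = (\<lambda>h. g p 0 (phi p z) + g p y (d_phi h z) + d_g h y (phi p z))"
    by (rule derivative_eq_if_eq_on_U[OF has_derivative_g_apply[OF has_derivative_phi_const has_derivative_const]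
          has_derivative_g_apply[OF has_derivative_const has_derivative_phi_const]])
      (rule pi_structure.G_f_swap[OF riem_pi_manifold_pi_structure[OF M]])
  from fun_cong[OF this, of h] show ?thesis by (simp add: P.G_simps add.commute)
qed

lemma d_phi_phi: "d_phi h (phi p y) = - (d_eta h y *\<^sub>R xi p + eta p y *\<^sub>R d_xi h) - phi p (d_phi h y)"
proof -
  have "((\<lambda>q. y - eta q y *\<^sub>R xi q) has_derivative (\<lambda>h. 0 - (eta p y *\<^sub>R d_xi h + d_eta h y *\<^sub>R xi p))) (at p)"
    by (intro has_derivative_diff has_derivative_const has_derivative_scaleR has_derivative_eta_const
        has_derivative_xi)
  then have "(\<lambda>h. phi p (d_phi h y) + d_phi h (phi p y)) = (\<lambda>h. 0 - (eta p y *\<^sub>R d_xi h + d_eta h y *\<^sub>R xi p))"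
    by (rule derivative_eq_if_eq_on_U[OF has_derivative_phi_apply[OF has_derivative_phi_const]])
      (rule pi_structure.f_f[OF riem_pi_manifold_pi_structure[OF M]])
  from fun_cong[OF this, of h] show ?thesis by (simp add: algebra_simps eq_diff_eq)
qed

lemma d_phi_xi: "d_phi h (xi p) = - phi p (d_xi h)"
proof -
  have "(\<lambda>h. phi p (d_xi h) + d_phi h (xi p)) = (\<lambda>h. 0)"
    by (rule derivative_eq_if_eq_on_U[OF has_derivative_phi_apply[OF has_derivative_xi] has_derivative_const])
      (rule pi_structure.f_e[OF riem_pi_manifold_pi_structure[OF M]])
  from fun_cong[OF this, of h] show ?thesis by (simp add: eq_neg_iff_add_eq_0 add.commute)
qed

lemma d_g_xi_xi: "d_g h (xi p) (xi p) + 2 * g p (d_xi h) (xi p) = 0"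
proof -
  have "(\<lambda>h. g p (d_xi h) (xi p) + g p (xi p) (d_xi h) + d_g h (xi p) (xi p)) = (\<lambda>h. 0)"
    by (rule derivative_eq_if_eq_on_U[OF has_derivative_g_apply[OF has_derivative_xi has_derivative_xi]
          has_derivative_const])
      (use pi_structure.G_e_right[OF riem_pi_manifold_pi_structure[OF M]]
        pi_structure.t_e[OF riem_pi_manifold_pi_structure[OF M]] in simp)
  from fun_cong[OF this, of h] show ?thesis using P.G_sym[of "xi p" "d_xi h"] by simp
qed

definition koszul :: "'a \<Rightarrow> 'a \<Rightarrow> 'a \<Rightarrow> real" where
  "koszul h y z = 1/2 * (d_g h y z + d_g y h z - d_g z h y)"

lemma trilinear_koszul: "trilinear koszul"
  unfolding koszul_def
  by (intro trilinearI linearI) (simp_all add: trilinear_simps[OF trilinear_d_g] algebra_simps)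

lemmas koszul_simps = trilinear_simps[OF trilinear_koszul]

lemma g_christoffel: "g p (christoffel g p x w) z = koszul x w z"
proof -
  have "frechet_derivative (\<lambda>q. g q y z) (at p) = (\<lambda>h. d_g h y z)" for y z
    using frechet_derivative_at[OF has_derivative_g_const] by simp
  then have "christoffel g p x w = (THE v. \<forall>z. g p v z = koszul x w z)"
    unfolding christoffel_def koszul_def by simp
  with theI'[OF P.G_riesz[OF trilinearD(3)[OF trilinear_koszul]]] show ?thesis by simp
qed

lemma F_tensor_eq: "F_tensor g phi p x y z = g p (d_phi x y) z + koszul x (phi p y) z - koszul x y (phi p z)"
proof -
  have "frechet_derivative (\<lambda>q. phi q y) (at p) = (\<lambda>h. d_phi h y)"
    using frechet_derivative_at[OF has_derivative_phi_const] by simp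
  then have "F_tensor g phi p x y z = g p (d_phi x y + christoffel g p x (phi p y) - phi p (christoffel g p x y)) z"
    unfolding F_tensor_def nabla_phi_def nabla_def by simp
  then show ?thesis by (simp add: P.G_simps P.G_f_swap g_christoffel)
qed

lemma F_space_F_tensor: "F_space (phi p) (xi p) (eta p) (F_tensor g phi p)"
proof (rule F_spaceI)
  show "trilinear (F_tensor g phi p)" unfolding F_tensor_eq[abs_def]
    by (intro trilinearI linearI)
      (simp_all add: koszul_simps d_phi_simps P.structure_simps algebra_simps)
  show "F_tensor g phi p x y z = F_tensor g phi p x z y" for x y z
  proof -
    have "g p (d_phi x y) z - g p (d_phi x z) y = d_g x y (phi p z) - d_g x (phi p y) z"
      using d_g_phi_swap[of x y z] by (simp add: P.G_sym[of y])
    then show ?thesis unfolding F_tensor_eq koszul_def using d_g_sym by (simp add: algebra_simps)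
  qed
  show "F_tensor g phi p x y z = - F_tensor g phi p x (phi p y) (phi p z)
      + eta p y * F_tensor g phi p x (xi p) z + eta p z * F_tensor g phi p x y (xi p)" for x y z
    unfolding F_tensor_eq d_phi_phi d_phi_xi
    by (simp add: P.structure_simps koszul_simps P.G_f_swap P.f_f P.f_e P.t_e P.t_f algebra_simps)
qed

lemma nabla_eta_eq: "nabla_eta g eta p x y = - F_tensor g phi p x (phi p y) (xi p)"
proof -
  have "frechet_derivative (\<lambda>q. eta q y) (at p) = (\<lambda>h. d_eta h y)"
    using frechet_derivative_at[OF has_derivative_eta_const] by simp
  then have "nabla_eta g eta p x y = d_eta x y - koszul x y (xi p)"
    unfolding nabla_eta_def nabla_def by (simp add: g_christoffel[symmetric] P.G_sym[of _ "xi p"])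
  moreover have "koszul x (xi p) (xi p) = - g p (d_xi x) (xi p)"
    using d_g_xi_xi[of x] unfolding koszul_def by simp
  ultimately show ?thesis unfolding F_tensor_eq d_phi_phi
    by (simp add: P.structure_simps koszul_simps P.G_f_swap P.f_f P.f_e P.t_e P.t_f P.G_sym[of "xi p"]
        algebra_simps)
qed

lemma g_nijenhuis:
  "g p (nijenhuis g phi xi eta p a b) z = nijenhuis_form (phi p) (xi p) (eta p) (F_tensor g phi p) a b z"
  unfolding nijenhuis_def nijenhuis_form_def
  by (simp add: P.G_simps P.G_f_swap F_tensor_def[symmetric] nabla_eta_eq algebra_simps)

lemma nijenhuis_eq_0_iff: "nijenhuis g phi xi eta p a b = 0 \<longleftrightarrow>
    (\<forall>z. nijenhuis_form (phi p) (xi p) (eta p) (F_tensor g phi p) a b z = 0)"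
  using P.G_eq_imp_eq[of "nijenhuis g phi xi eta p a b" 0] by (auto simp: g_nijenhuis[symmetric] P.G_simps)

lemma in_U1_iff_nijenhuis_phi_eq_0:
  "in_class_sum U1_classes n (phi p) (xi p) (eta p) (g p) (F_tensor g phi p)
     \<longleftrightarrow> (\<forall>x y. nijenhuis g phi xi eta p (phi p x) (phi p y) = 0)"
  unfolding P.in_U1_iff_nijenhuis_form_eq_0[OF F_space_F_tensor] nijenhuis_eq_0_iff by blast

end

theorem lemma2p2:
  fixes n :: nat and U :: "'a::euclidean_space set"
    and phi :: "'a \<Rightarrow> 'a \<Rightarrow> 'a" and xi :: "'a \<Rightarrow> 'a"
    and eta :: "'a \<Rightarrow> 'a \<Rightarrow> real" and g :: "'a \<Rightarrow> 'a \<Rightarrow> 'a \<Rightarrow> real"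
  assumes "riem_pi_manifold n U phi xi eta g"
  shows "(\<forall>p\<in>U. in_class_sum U1_classes n (phi p) (xi p) (eta p) (g p) (F_tensor g phi p))
     \<longleftrightarrow> (\<forall>p\<in>U. \<forall>x y. nijenhuis g phi xi eta p (phi p x) (phi p y) = 0)"
  using in_U1_iff_nijenhuis_phi_eq_0[OF assms] by blast

end
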